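(* Let ${\rm H}>0$ and ${\rm K}>0$. If there exists a centered Gaussian process $(B(t))_{t\ge 0}$ with covariance \[ \mathbb{E}\,B(s)B(t)=2^{-{\rm K}}\Bigl(\bigl(s^{2{\rm H}}+t^{2{\rm H}}\bigr)^{{\rm K}}-|t-s|^{2{\rm H}{\rm K}}\Bigr),\qquad s,t\ge 0, \] (i.e. bifractional Brownian motion with parameters $({\rm H},{\rm K})$ exists on $\mathbb{R}_+$), then ${\rm K}\le 2$ and ${\rm H}{\rm K}\le 1$. *)

theory Defs
  imports "HOL-Probability.Probability"
begin

definition centered_gaussian_rv :: "'a measure \<Rightarrow> ('a \<Rightarrow> real) \<Rightarrow> bool" where
  "centered_gaussian_rv M X \<longleftrightarrow>
     X \<in> borel_measurable M \<and>
     ((AE \<omega> in M. X \<omega> = 0) \<or> (\<exists>\<sigma>>0. distributed M lborel X (normal_density 0 \<sigma>)))"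

definition centered_gaussian_process ::
    "'a measure \<Rightarrow> (real \<Rightarrow> 'a \<Rightarrow> real) \<Rightarrow> bool" where
  "centered_gaussian_process M B \<longleftrightarrow>
     prob_space M \<and>
     (\<forall>t\<ge>0. B t \<in> borel_measurable M) \<and>
     (\<forall>I c. finite I \<and> I \<subseteq> {0..} \<longrightarrow>
        centered_gaussian_rv M (\<lambda>\<omega>. \<Sum>t\<in>I. c t * B t \<omega>))"

definition bifBm_cov :: "real \<Rightarrow> real \<Rightarrow> real \<Rightarrow> real \<Rightarrow> real" where
  "bifBm_cov H K s t =
     2 powr (- K) * ((s powr (2*H) + t powr (2*H)) powr K - \<bar>t - s\<bar> powr (2*H*K))"

end

theory Submission
  imports Defs
begin

text \<open>Any covariance satisfies the Cauchy--Schwarz inequality, so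
  \<open>R(1,x) \<le> sqrt (R(1,1) R(x,x)) = x^(HK)\<close>.
  On the other hand, Bernoulli's inequality for real exponents bounds \<open>R(1,x)\<close> from below
  by a multiple of \<open>x^(2H(K-1))\<close> and, for \<open>2HK \<ge> 1\<close>, of \<open>x^(2HK-1)\<close>.
  Comparing growth as \<open>x \<rightarrow> \<infinity>\<close> gives \<open>K \<le> 2\<close> and \<open>HK \<le> 1\<close>.\<close>

lemma powr_add_ge_Bernoulli:
  fixes a b p :: real
  assumes "a > 0" "b \<ge> 0" "p \<ge> 1"
  shows "a powr p + p * b * a powr (p - 1) \<le> (a + b) powr p"
proof -
  let ?g = "\<lambda>z. (1 + z) powr p - 1 - p * z"
  have "0 \<le> b / a" using assms by simp
  then have "?g 0 \<le> ?g (b / a)"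
  proof (rule DERIV_nonneg_imp_nondecreasing)
    fix y :: real assume "0 \<le> y" "y \<le> b / a"
    then have "(?g has_real_derivative p * (1 + y) powr (p - 1) - p) (at y)"
      by (auto intro!: derivative_eq_intros)
    moreover have "0 \<le> p * (1 + y) powr (p - 1) - p"
      using \<open>0 \<le> y\<close> assms(3) by (simp add: ge_one_powr_ge_zero)
    ultimately show "\<exists>d. (?g has_real_derivative d) (at y) \<and> 0 \<le> d" by blast
  qed
  then have Bernoulli: "1 + p * (b / a) \<le> (1 + b / a) powr p" by simp
  have "a + b = a * (1 + b / a)" using assms(1) by (simp add: field_simps)
  then have "(a + b) powr p = a powr p * (1 + b / a) powr p"
    using assms by (simp add: powr_mult)
  also have "\<dots> \<ge> a powr p * (1 + p * (b / a))"
    using Bernoulli by (intro mult_left_mono) auto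
  finally show ?thesis using assms(1) by (simp add: powr_diff field_simps)
qed

lemma powr_bounded_imp_exponent_nonpos:
  fixes e C x\<^sub>0 :: real
  assumes bounded: "\<And>x. x \<ge> x\<^sub>0 \<Longrightarrow> x powr e \<le> C"
  shows "e \<le> 0"
proof (rule ccontr)
  assume "\<not> e \<le> 0"
  then have e: "e > 0" by simp
  define x where "x = max (max x\<^sub>0 1) ((\<bar>C\<bar> + 1) powr (1 / e))"
  have "\<bar>C\<bar> + 1 = ((\<bar>C\<bar> + 1) powr (1 / e)) powr e"
    using e by (simp add: powr_powr)
  also have "\<dots> \<le> x powr e"
    unfolding x_def using e by (intro powr_mono2) auto
  also have "\<dots> \<le> C"
    using bounded[of x] by (simp add: x_def)
  finally show False by simp
qed

lemma two_mult_integral_mult_le: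
  fixes M :: "'a measure" and f g :: "'a \<Rightarrow> real" and a :: real
  assumes "integrable M (\<lambda>\<omega>. f \<omega> * f \<omega>)" "integrable M (\<lambda>\<omega>. f \<omega> * g \<omega>)"
    "integrable M (\<lambda>\<omega>. g \<omega> * g \<omega>)"
  shows "2 * a * (\<integral>\<omega>. f \<omega> * g \<omega> \<partial>M) \<le> a\<^sup>2 * (\<integral>\<omega>. f \<omega> * f \<omega> \<partial>M) + (\<integral>\<omega>. g \<omega> * g \<omega> \<partial>M)"
proof -
  have "0 \<le> (\<integral>\<omega>. (a * f \<omega> - g \<omega>)\<^sup>2 \<partial>M)" by simp
  also have "\<dots> = (\<integral>\<omega>. a\<^sup>2 * (f \<omega> * f \<omega>) - 2 * a * (f \<omega> * g \<omega>) + g \<omega> * g \<omega> \<partial>M)"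
    by (simp add: power2_eq_square algebra_simps)
  also have "\<dots> = a\<^sup>2 * (\<integral>\<omega>. f \<omega> * f \<omega> \<partial>M) - 2 * a * (\<integral>\<omega>. f \<omega> * g \<omega> \<partial>M)
                 + (\<integral>\<omega>. g \<omega> * g \<omega> \<partial>M)"
    using assms by simp
  finally show ?thesis by simp
qed

lemma bifBm_cov_diagonal:
  assumes "t \<ge> 0"
  shows "bifBm_cov H K t t = t powr (2 * H * K)"
  using assms by (simp add: bifBm_cov_def powr_mult powr_powr powr_minus)

lemma bifBm_cov_le_of_covariance:
  fixes H K x :: real and M :: "'a measure" and B :: "real \<Rightarrow> 'a \<Rightarrow> real"
  assumes cov: "\<And>s t. s \<ge> 0 \<Longrightarrow> t \<ge> 0 \<Longrightarrow>
           integrable M (\<lambda>\<omega>. B s \<omega> * B t \<omega>) \<and>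
           (\<integral>\<omega>. B s \<omega> * B t \<omega> \<partial>M) = bifBm_cov H K s t"
    and x: "x \<ge> 1"
  shows "bifBm_cov H K 1 x \<le> x powr (H * K)"
proof -
  define a where "a = x powr (H * K)"
  have "a > 0" using x by (simp add: a_def)
  have "a\<^sup>2 = x powr (2 * H * K)"
    using x by (simp add: a_def power2_eq_square powr_add[symmetric] mult.assoc)
  then have "2 * a * bifBm_cov H K 1 x \<le> a\<^sup>2 * 1 + a\<^sup>2"
    using two_mult_integral_mult_le[of M "B 1" "B x" a] cov[of 1 1] cov[of 1 x] cov[of x x] x
    by (simp add: bifBm_cov_diagonal)
  then show ?thesis
    using \<open>a > 0\<close> by (simp add: a_def power2_eq_square)
qed

lemma bifBm_cov_one:
  assumes "x \<ge> 1"
  shows "bifBm_cov H K 1 x = 2 powr (- K) * ((1 + x powr (2 * H)) powr K - (x - 1) powr (2 * H * K))"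
  using assms by (simp add: bifBm_cov_def)

lemma bifBm_K_le_2_of_bound:
  assumes H: "H > 0" and K: "K > 0"
    and bound: "\<And>x. x \<ge> 1 \<Longrightarrow> bifBm_cov H K 1 x \<le> x powr (H * K)"
  shows "K \<le> 2"
proof (cases "K \<ge> 1")
  case True
  have "x powr (H * (K - 2)) \<le> 2 powr K / K" if x: "x \<ge> 1" for x
  proof -
    define a where "a = x powr (2 * H)"
    have "a > 0" using x by (simp add: a_def)
    have "(x - 1) powr (2 * H * K) \<le> a powr K"
      unfolding a_def using x H K by (simp add: powr_powr powr_mono2)
    moreover have "a powr K + K * 1 * a powr (K - 1) \<le> (a + 1) powr K"
      using powr_add_ge_Bernoulli[of a 1 K] \<open>a > 0\<close> True by simp
    ultimately have "K * a powr (K - 1) \<le> (1 + a) powr K - (x - 1) powr (2 * H * K)"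
      by (simp add: add.commute)
    then have "2 powr (- K) * (K * a powr (K - 1)) \<le> bifBm_cov H K 1 x"
      unfolding bifBm_cov_one[OF x] a_def by (rule mult_left_mono) simp
    also have "\<dots> \<le> x powr (H * K)" using bound[OF x] .
    also have "a powr (K - 1) = x powr (H * K) * x powr (H * (K - 2))"
      unfolding a_def using x by (simp add: powr_powr powr_add[symmetric] algebra_simps)
    finally have "(2 powr (- K) * K * x powr (H * (K - 2))) * x powr (H * K) \<le> 1 * x powr (H * K)"
      by (simp add: mult_ac)
    then have "2 powr (- K) * K * x powr (H * (K - 2)) \<le> 1"
      using x by (simp only: mult_le_cancel_right) simp
    then show ?thesis
      using K by (simp add: powr_minus field_simps)
  qed
  then have "H * (K - 2) \<le> 0" by (rule powr_bounded_imp_exponent_nonpos)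
  then show ?thesis using H by (simp add: mult_le_0_iff)
qed simp

lemma bifBm_HK_le_1_of_bound:
  assumes H: "H > 0" and K: "K > 0"
    and bound: "\<And>x. x \<ge> 1 \<Longrightarrow> bifBm_cov H K 1 x \<le> x powr (H * K)"
  shows "H * K \<le> 1"
proof (cases "2 * H * K \<ge> 1")
  case True
  define p where "p = 2 * H * K"
  have "p \<ge> 1" using True by (simp add: p_def)
  have "x powr (H * K - 1) \<le> 2 powr K * 2 powr (p - 1) / p" if x: "x \<ge> 2" for x
  proof -
    from x have "x \<ge> 1" by simp
    have "(x - 1) powr p + p * 1 * (x - 1) powr (p - 1) \<le> ((x - 1) + 1) powr p"
      using powr_add_ge_Bernoulli[of "x - 1" 1 p] x \<open>p \<ge> 1\<close> by simp
    moreover have "x powr p = (x powr (2 * H)) powr K"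
      using x by (simp add: powr_powr p_def)
    moreover have "(x powr (2 * H)) powr K \<le> (1 + x powr (2 * H)) powr K"
      using K by (intro powr_mono2) auto
    moreover have "p * (x / 2) powr (p - 1) \<le> p * (x - 1) powr (p - 1)"
      using x \<open>p \<ge> 1\<close> by (intro mult_left_mono powr_mono2) auto
    ultimately have "p * (x / 2) powr (p - 1) \<le> (1 + x powr (2 * H)) powr K - (x - 1) powr p"
      by simp
    then have "2 powr (- K) * (p * (x / 2) powr (p - 1)) \<le> bifBm_cov H K 1 x"
      unfolding bifBm_cov_one[OF \<open>x \<ge> 1\<close>] p_def by (rule mult_left_mono) simp
    also have "\<dots> \<le> x powr (H * K)" using bound[OF \<open>x \<ge> 1\<close>] .
    also have "(x / 2) powr (p - 1) = x powr (H * K) * x powr (H * K - 1) / 2 powr (p - 1)"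
      using x by (simp add: powr_divide powr_add[symmetric] p_def algebra_simps)
    finally have "(2 powr (- K) * p / 2 powr (p - 1) * x powr (H * K - 1)) * x powr (H * K)
        \<le> 1 * x powr (H * K)"
      by (simp add: mult_ac)
    then have "2 powr (- K) * p / 2 powr (p - 1) * x powr (H * K - 1) \<le> 1"
      using x by (simp only: mult_le_cancel_right) simp
    then show ?thesis
      using \<open>p \<ge> 1\<close> by (simp add: powr_minus field_simps)
  qed
  then have "H * K - 1 \<le> 0" by (rule powr_bounded_imp_exponent_nonpos)
  then show ?thesis by simp
qed simp

theorem proposition3p1:
  fixes H K :: real and M :: "'a measure" and B :: "real \<Rightarrow> 'a \<Rightarrow> real"
  assumes "H > 0" and "K > 0"
    and "centered_gaussian_process M B"
    and "\<And>s t. s \<ge> 0 \<Longrightarrow> t \<ge> 0 \<Longrightarrow>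
           integrable M (\<lambda>\<omega>. B s \<omega> * B t \<omega>) \<and>
           (\<integral>\<omega>. B s \<omega> * B t \<omega> \<partial>M) = bifBm_cov H K s t"
  shows "K \<le> 2 \<and> H * K \<le> 1"
proof -
  have bound: "\<And>x. x \<ge> 1 \<Longrightarrow> bifBm_cov H K 1 x \<le> x powr (H * K)"
    using bifBm_cov_le_of_covariance[OF assms(4)] .
  show ?thesis
    using bifBm_K_le_2_of_bound[OF assms(1,2) bound] bifBm_HK_le_1_of_bound[OF assms(1,2) bound]
    by blast
qed

end
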